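(* Let $m,n\ge 3$. Let $K_m=U_{\{0,2\},m}(a,b,c)$, let $L_n=U_{\{1,3\},n}(b,a,c)$ if $n\ge 4$, and let $L_3=U_{\{1\},3}(b,a,c)$. Then the state complexities of $K_m^R\cup L_n^R$, $K_m^R\cap L_n^R$ and $K_m^R\setminus L_n^R$ are each $(2^m-1)(2^n-1)+1$, and the state complexity of $K_m^R\oplus L_n^R$ is $2^{m+n-1}$.
   Context: The state complexity of a regular language is the number of states of its minimal complete DFA. For $n\ge 3$, $\mathcal{U}_n(a,b,c)$ is the DFA over $\{a,b,c\}$ with states $\{0,\dots,n-1\}$, initial state $0$, where $a$ maps $i\mapsto i+1\pmod n$, $b$ swaps $0$ and $1$ fixing other states, and $c$ maps $n-1$ to $0$ fixing other states. $\mathcal{U}_n(b,a,c)$ is the same with the roles of $a$ and $b$ interchanged ($b$ is the cycle $i\mapsto i+1\pmod n$, $a$ swaps $0$ and $1$). For a set $F\subseteq\{0,\dots,n-1\}$, $U_{F,n}(a,b,c)$ (resp. $U_{F,n}(b,a,c)$) denotes the language accepted by $\mathcal{U}_n(a,b,c)$ (resp. $\mathcal{U}_n(b,a,c)$) with final state set $F$. $L^R$ is the reversal of $L$; $\setminus$ is set difference, $\oplus$ symmetric difference. *)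

theory Defs
  imports Main
begin

datatype sym = A | B | C

text \<open>Complete DFAs over the alphabet sym, with states drawn from nat
  (no loss of generality: any finite state set can be renamed into nat).\<close>
definition is_dfa :: "nat set \<Rightarrow> nat \<Rightarrow> (nat \<Rightarrow> sym \<Rightarrow> nat) \<Rightarrow> nat set \<Rightarrow> bool" where
  "is_dfa Q q0 d F \<longleftrightarrow> finite Q \<and> q0 \<in> Q \<and> (\<forall>q\<in>Q. \<forall>x. d q x \<in> Q) \<and> F \<subseteq> Q"

definition dfa_lang :: "nat \<Rightarrow> (nat \<Rightarrow> sym \<Rightarrow> nat) \<Rightarrow> nat set \<Rightarrow> sym list set" where
  "dfa_lang q0 d F = {w. foldl d q0 w \<in> F}"

definition sc :: "sym list set \<Rightarrow> nat" where
  "sc L = (LEAST k. \<exists>Q q0 d F. is_dfa Q q0 d F \<and> card Q = k \<and> dfa_lang q0 d F = L)"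

definition cyc :: "nat \<Rightarrow> nat \<Rightarrow> nat" where "cyc n q = (q + 1) mod n"
definition swp :: "nat \<Rightarrow> nat" where "swp q = (if q = 0 then 1 else if q = 1 then 0 else q)"
definition lastto0 :: "nat \<Rightarrow> nat \<Rightarrow> nat" where "lastto0 n q = (if q = n - 1 then 0 else q)"

fun U_abc :: "nat \<Rightarrow> nat \<Rightarrow> sym \<Rightarrow> nat" where
  "U_abc n q A = cyc n q"
| "U_abc n q B = swp q"
| "U_abc n q C = lastto0 n q"

fun U_bac :: "nat \<Rightarrow> nat \<Rightarrow> sym \<Rightarrow> nat" where
  "U_bac n q A = swp q"
| "U_bac n q B = cyc n q"
| "U_bac n q C = lastto0 n q"

definition U_lang_abc :: "nat set \<Rightarrow> nat \<Rightarrow> sym list set" where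
  "U_lang_abc F n = dfa_lang 0 (U_abc n) F"
definition U_lang_bac :: "nat set \<Rightarrow> nat \<Rightarrow> sym list set" where
  "U_lang_bac F n = dfa_lang 0 (U_bac n) F"

definition reversal :: "sym list set \<Rightarrow> sym list set" where
  "reversal L = rev ` L"

definition symdiff :: "'a set \<Rightarrow> 'a set \<Rightarrow> 'a set" where
  "symdiff X Y = (X - Y) \<union> (Y - X)"

end

theory Submission
  imports Defs
begin

text \<open>The reversal of the language of a DFA with initial state 0 and final states F is recognized by
  the subset automaton whose state after reading w is the set of states from which rev w leads
  into F. For a Boolean operation op, the language op(K_m^R, L_n^R) is therefore recognized by a DFA
  whose states are pairs (S, T) of such sets, and only the set of pairs of states (p, q) with
  op (p in S) (q in T) matters. Every pair (S, T) is reachable: words over a and b permute the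
  states and can move any 2-set to {m-1, 0} and any 2-set to {n-1, 0} simultaneously (except when
  m = n = 4, which is checked exhaustively), so from the initial pair they reach every pair with
  |S| = 2 and |T| = |F_L|; the letter c merges m-1 into 0 and n-1 into 0, and thereby changes |S|
  and |T| by one step, which gives every other pair by induction. The sets of pairs are pairwise
  distinguishable because every pair of states of the product automaton is reachable from (0, 0).
  Hence the state complexity is the number of sets of pairs: for intersection they are the
  products S \<times> T, of which there are (2^m - 1)(2^n - 1) + 1, and union and difference reduce to
  this by complementation; for symmetric difference exactly (S, T) and its complement give the same
  set, which leaves 2^(m+n-1).\<close>

fun swap_ab :: "sym \<Rightarrow> sym" where
  "swap_ab A = B" | "swap_ab B = A" | "swap_ab C = C"

lemma swap_ab_swap_ab [simp]: "swap_ab (swap_ab x) = x"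
  by (cases x) auto

lemma map_swap_ab_swap_ab [simp]: "map swap_ab (map swap_ab w) = w"
  by (induction w) auto

lemma set_map_swap_ab: "set g \<subseteq> {A, B} \<Longrightarrow> set (map swap_ab g) \<subseteq> {A, B}"
  by (induction g) auto

definition run :: "nat \<Rightarrow> sym list \<Rightarrow> nat \<Rightarrow> nat" where
  "run k w q = foldl (U_abc k) q w"

lemma run_Nil [simp]: "run k [] q = q"
  and run_Cons [simp]: "run k (x # w) q = run k w (U_abc k q x)"
  and run_append [simp]: "run k (u @ v) q = run k v (run k u q)"
  by (simp_all add: run_def)

lemma image_run_append: "run k (u @ v) ` X = run k v ` run k u ` X"
  by (simp add: image_image)

lemma foldl_U_bac: "foldl (U_bac n) q w = run n (map swap_ab w) q"
proof -
  have "U_bac n q x = U_abc n q (swap_ab x)" for q x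
    by (cases x) auto
  then show ?thesis
    by (induction w arbitrary: q) (simp_all add: run_def)
qed

lemma swp_swp [simp]: "swp (swp q) = q"
  and swp_0 [simp]: "swp 0 = 1"
  and swp_1 [simp]: "swp (Suc 0) = 0"
  and swp_ge_2 [simp]: "2 \<le> q \<Longrightarrow> swp q = q"
  by (simp_all add: swp_def)

lemma swp_lt: "q < k \<Longrightarrow> 2 \<le> k \<Longrightarrow> swp q < k"
  by (auto simp: swp_def)

lemma cyc_eq: "q < k \<Longrightarrow> cyc k q = (if Suc q = k then 0 else Suc q)"
  by (simp add: cyc_def mod_Suc)

lemma run_lt: "q < k \<Longrightarrow> 2 \<le> k \<Longrightarrow> run k w q < k"
proof (induction w arbitrary: q)
  case (Cons x w)
  then show ?case
    by (cases x) (auto simp: cyc_def swp_lt lastto0_def)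
qed simp

lemma run_replicate_A: "q < k \<Longrightarrow> run k (replicate j A) q = (q + j) mod k"
  by (induction j arbitrary: q) (auto simp: cyc_def mod_add_left_eq)

lemma run_replicate_B: "run k (replicate j B) q = (if even j then q else swp q)"
  by (induction j arbitrary: q) auto

lemma run_replicate_id:
  assumes "x \<in> {A, B}" "2 * k dvd j" "q < k"
  shows "run k (replicate j x) q = q"
proof -
  obtain c where "j = 2 * k * c"
    using assms(2) by (rule dvdE)
  then have "j = k * (2 * c)"
    by (simp add: ac_simps)
  then show ?thesis
    using assms(1,3) by (auto simp: run_replicate_A run_replicate_B)
qed

lemma inj_on_run:
  assumes "set g \<subseteq> {A, B}" "2 \<le> k"
  shows "inj_on (run k g) {..<k}"
  using assms(1)
proof (induction g)
  case (Cons x g)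
  have IH: "inj_on (run k g) {..<k}"
    using Cons by simp
  have letter: "inj_on (\<lambda>q. U_abc k q x) {..<k}"
  proof (cases x)
    case A
    then show ?thesis
      by (auto simp: inj_on_def cyc_eq)
  next
    case B
    then show ?thesis
      by (auto intro!: inj_on_inverseI[of _ swp])
  next
    case C
    then show ?thesis
      using Cons.prems by simp
  qed
  have "(\<lambda>q. U_abc k q x) ` {..<k} \<subseteq> {..<k}"
    using run_lt[of _ k "[x]"] assms(2) by auto
  then have "inj_on (run k g \<circ> (\<lambda>q. U_abc k q x)) {..<k}"
    using comp_inj_on[OF letter inj_on_subset[OF IH]] by blast
  then show ?case
    by (simp add: comp_def)
qed (simp add: inj_on_def)

lemma image_run_lessThan:
  assumes "set g \<subseteq> {A, B}" "2 \<le> k"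
  shows "run k g ` {..<k} = {..<k}"
  using assms run_lt by (intro endo_inj_surj inj_on_run) auto

definition pre :: "nat \<Rightarrow> sym list \<Rightarrow> nat set \<Rightarrow> nat set" where
  "pre k w X = {q. q < k \<and> run k w q \<in> X}"

lemma pre_subset: "pre k w X \<subseteq> {..<k}"
  by (auto simp: pre_def)

lemma pre_append: "2 \<le> k \<Longrightarrow> pre k (u @ v) X = pre k u (pre k v X)"
  by (auto simp: pre_def run_lt)

lemma pre_Diff: "2 \<le> k \<Longrightarrow> pre k w ({..<k} - X) = {..<k} - pre k w X"
  by (auto simp: pre_def run_lt)

lemma pre_id:
  assumes "\<And>q. q < k \<Longrightarrow> run k w q = q" "X \<subseteq> {..<k}"
  shows "pre k w X = X"
  using assms by (auto simp: pre_def)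

lemma pre_image_run:
  assumes "set g \<subseteq> {A, B}" "2 \<le> k" "P \<subseteq> {..<k}"
  shows "pre k g (run k g ` P) = P"
  using assms inj_on_run[OF assms(1,2)] by (auto simp: pre_def inj_on_def)

lemma image_run_pre:
  assumes "set g \<subseteq> {A, B}" "2 \<le> k" "S \<subseteq> {..<k}"
  shows "run k g ` pre k g S = S"
  using assms image_run_lessThan[OF assms(1,2)] by (auto simp: pre_def)

lemma card_pre:
  assumes "set g \<subseteq> {A, B}" "2 \<le> k" "S \<subseteq> {..<k}"
  shows "card (pre k g S) = card S"
proof -
  have "inj_on (run k g) (pre k g S)"
    using inj_on_run[OF assms(1,2)] pre_subset by (rule inj_on_subset)
  then show ?thesis
    using card_image image_run_pre[OF assms] by metis
qed

fun inv_word :: "nat \<Rightarrow> sym list \<Rightarrow> sym list" where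
  "inv_word N [] = []"
| "inv_word N (x # g) = inv_word N g @ replicate N x"

lemma map_swap_ab_inv_word: "map swap_ab (inv_word N g) = inv_word N (map swap_ab g)"
  by (induction g) auto

lemma run_inv_word:
  assumes "set g \<subseteq> {A, B}" "2 * k dvd Suc N" "q < k" "2 \<le> k"
  shows "run k (inv_word N g @ g) q = q"
  using assms(1,3)
proof (induction g arbitrary: q)
  case (Cons x g)
  have "replicate N x @ [x] = replicate (Suc N) x"
    by (simp add: replicate_append_same)
  then have "run k (inv_word N (x # g) @ x # g) q
      = run k g (run k (replicate (Suc N) x) (run k (inv_word N g) q))"
    by (metis append.assoc append_Cons append_Nil inv_word.simps(2) run_append)
  also have "\<dots> = run k g (run k (inv_word N g) q)"
    using Cons.prems assms(2,4) by (simp add: run_replicate_id run_lt del: replicate_Suc)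
  also have "\<dots> = q"
    using Cons by simp
  finally show ?case .
qed simp

text \<open>The pair (pre m v F1, pre n (map swap_ab v) F2) is the state reached by the word rev v in
  the subset automata of the reversals of the two languages.\<close>

definition reachable_pairs :: "nat \<Rightarrow> nat \<Rightarrow> nat set \<Rightarrow> nat set \<Rightarrow> (nat set \<times> nat set) set"
  where
  "reachable_pairs m n F1 F2 = {(pre m v F1, pre n (map swap_ab v) F2) | v. True}"

lemma reachable_pairs_word: "(pre m v F1, pre n (map swap_ab v) F2) \<in> reachable_pairs m n F1 F2"
  by (auto simp: reachable_pairs_def)

lemma reachable_pairs_start:
  "F1 \<subseteq> {..<m} \<Longrightarrow> F2 \<subseteq> {..<n} \<Longrightarrow> (F1, F2) \<in> reachable_pairs m n F1 F2"
  using reachable_pairs_word[of m "[]" F1 n F2] pre_id[of m "[]" F1] pre_id[of n "[]" F2] by simp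

lemma reachable_pairs_pre:
  assumes "(S, T) \<in> reachable_pairs m n F1 F2" "2 \<le> m" "2 \<le> n"
  shows "(pre m u S, pre n (map swap_ab u) T) \<in> reachable_pairs m n F1 F2"
proof -
  obtain v where "S = pre m v F1" "T = pre n (map swap_ab v) F2"
    using assms(1) by (auto simp: reachable_pairs_def)
  then show ?thesis
    using reachable_pairs_word[of m "u @ v" F1 n F2] assms(2,3) by (simp add: pre_append)
qed

lemma reachable_pairs_pre_iff:
  assumes "set g \<subseteq> {A, B}" "S \<subseteq> {..<m}" "T \<subseteq> {..<n}" "2 \<le> m" "2 \<le> n"
  shows "(pre m g S, pre n (map swap_ab g) T) \<in> reachable_pairs m n F1 F2 \<longleftrightarrow>
    (S, T) \<in> reachable_pairs m n F1 F2"
proof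
  define N where "N = 2 * m * n - 1"
  have "2 * m dvd Suc N" "2 * n dvd Suc N"
    using assms(4,5) by (simp_all add: N_def)
  then have id: "pre m (inv_word N g @ g) S = S"
    "pre n (inv_word N (map swap_ab g) @ map swap_ab g) T = T"
    using pre_id[OF run_inv_word[OF assms(1) _ _ assms(4)] assms(2)]
      pre_id[OF run_inv_word[OF set_map_swap_ab[OF assms(1)] _ _ assms(5)] assms(3)]
    by simp_all
  assume "(pre m g S, pre n (map swap_ab g) T) \<in> reachable_pairs m n F1 F2"
  from reachable_pairs_pre[OF this assms(4,5), of "inv_word N g"]
  show "(S, T) \<in> reachable_pairs m n F1 F2"
    using assms(4,5) by (simp add: map_swap_ab_inv_word pre_append[symmetric] id)
qed (rule reachable_pairs_pre[OF _ assms(4,5)])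

lemma exists_word_to_pair:
  assumes k: "3 \<le> k" and P: "P \<subseteq> {..<k}" "card P = 2"
  obtains g where "set g \<subseteq> {A, B}" "run k g ` {k - 1, 0} = P"
proof -
  \<comment> \<open>The word AB fixes 0 and cycles the other states: k - 1 \<mapsto> 1 \<mapsto> 2 \<mapsto> \<dots> \<mapsto> k - 1.\<close>
  have fix0: "\<exists>g. set g \<subseteq> {A, B} \<and> run k g (k - 1) = d \<and> run k g 0 = 0"
    if "1 \<le> d" "d \<le> k - 1" for d
    using that
  proof (induction d)
    case (Suc d)
    show ?case
    proof (cases "d = 0")
      case True
      then show ?thesis
        using k by (intro exI[of _ "[A, B]"]) (simp add: cyc_def)
    next
      case False
      then obtain g where "set g \<subseteq> {A, B}" "run k g (k - 1) = d" "run k g 0 = 0"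
        using Suc by auto
      then show ?thesis
        using False Suc.prems k by (intro exI[of _ "g @ [A, B]"]) (simp add: cyc_def)
    qed
  qed simp
  obtain u v where uv: "P = {u, v}" "u \<noteq> v"
    using P(2) by (auto simp: card_2_iff)
  have "u < k" "v < k"
    using P(1) uv(1) by auto
  define d where "d = (if v \<le> u then u - v else u + k - v)"
  have "1 \<le> d" "d \<le> k - 1" "(d + v) mod k = u"
    using \<open>u < k\<close> \<open>v < k\<close> uv(2) by (auto simp: d_def)
  moreover obtain g where "set g \<subseteq> {A, B}" "run k g (k - 1) = d" "run k g 0 = 0"
    using fix0 calculation by blast
  ultimately show ?thesis
    using \<open>v < k\<close> uv(1) k
    by (intro that[of "g @ replicate v A"]) (auto simp: run_replicate_A)
qed

text \<open>The maps shift and rho below are the words conj_cycle_word and AA of the first automaton,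
  seen in the coordinates obtained by conjugating with swp: shift is the rotation of {..<k} and rho
  the conjugate of the rotation by two.\<close>

locale shift_rho_closed =
  fixes k :: nat and Z :: "nat \<Rightarrow> nat \<Rightarrow> bool"
  assumes k: "3 \<le> k" "k \<noteq> 4"
    and sym: "Z x y \<Longrightarrow> Z y x"
    and shift: "Z x y \<Longrightarrow> Z ((x + 1) mod k) ((y + 1) mod k)"
    and rho: "Z x y \<Longrightarrow> Z (swp ((swp x + 2) mod k)) (swp ((swp y + 2) mod k))"
    and start: "Z (k - 1) 1"
begin

lemma shift_to:
  assumes "Z p q" "p < k" "q < k" "(p + j) mod k = p'" "(q + j) mod k = q'"
  shows "Z p' q'"
proof -
  have "Z ((p + i) mod k) ((q + i) mod k)" for i
    by (induction i) (use assms(1-3) in \<open>auto dest: shift simp: mod_Suc_eq\<close>)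
  then show ?thesis
    using assms(4,5) by blast
qed

lemma rho_to:
  "Z x y \<Longrightarrow> swp ((swp x + 2) mod k) = x' \<Longrightarrow> swp ((swp y + 2) mod k) = y' \<Longrightarrow> Z x' y'"
  using rho by blast

text \<open>From distance 2 (the start pair), rho produces distance 1, then distance 3, and from there
  every larger distance.\<close>

lemma zero_pairs_upward:
  assumes "5 \<le> k" "Z 0 3" "3 \<le> d" "d < k"
  shows "Z 0 d"
  using assms(3,4)
proof (induction d)
  case (Suc d)
  show ?case
  proof (cases "d = 2")
    case False
    then have d: "3 \<le> d" "d \<le> k - 2"
      using Suc.prems by auto
    have "Z (k - d) 0"
      by (rule shift_to[OF Suc.IH, where j = "k - d"]) (use d in auto)
    then have "Z (k - d + 2) 3"
      by (rule rho_to) (use d assms(1) in \<open>auto simp: swp_def\<close>)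
    then show ?thesis
      by (rule shift_to[where j = "d - 2"]) (use d assms(1) in \<open>auto simp: Suc_diff_Suc numeral_2_eq_2\<close>)
  qed (use assms(2) in simp)
qed simp

lemma zero_pairs:
  assumes "1 \<le> d" "d < k"
  shows "Z 0 d"
proof -
  have [simp]: "Suc k mod k = 1" "Suc (Suc k) mod k = 2"
    using k by (simp_all add: mod_Suc)
  have Z02: "Z 0 2"
    by (rule shift_to[OF start, where j = 1]) (use k in auto)
  show ?thesis
  proof (cases "k = 3")
    case True
    have "Z 1 0"
      by (rule shift_to[OF start, where j = 2]) (use True in auto)
    moreover have "d = 1 \<or> d = 2"
      using assms True by auto
    ultimately show ?thesis
      using Z02 sym by auto
  next
    case False
    then have k5: "5 \<le> k"
      using k by simp
    have "Z 3 4"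
      by (rule rho_to[OF Z02]) (use k5 in \<open>auto simp: swp_def\<close>)
    then have Z01: "Z 0 1"
      by (rule shift_to[where j = "k - 3"]) (use k5 in auto)
    have "Z (k - 1) 0"
      by (rule shift_to[OF Z01, where j = "k - 1"]) (use k5 in auto)
    then have "Z 0 3"
      by (rule rho_to) (use k5 in \<open>auto simp: swp_def\<close>)
    then show ?thesis
      using assms Z01 Z02 zero_pairs_upward[OF k5] by (cases "d \<le> 2") (auto simp: le_Suc_eq numeral_2_eq_2)
  qed
qed

lemma all_pairs:
  assumes "x < k" "y < k" "x \<noteq> y"
  shows "Z x y"
proof (cases "x < y")
  case True
  have "Z 0 (y - x)"
    using zero_pairs True assms by simp
  then show ?thesis
    by (rule shift_to[where j = x]) (use assms True in auto)
next
  case False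
  have "Z 0 (x - y)"
    using zero_pairs False assms by simp
  then have "Z y x"
    by (rule shift_to[where j = y]) (use assms False in auto)
  then show ?thesis
    by (rule sym)
qed

end

definition conj_cycle_word :: "nat \<Rightarrow> sym list" where
  "conj_cycle_word n = [B, A] @ replicate (2 * n - 1) B"

lemma set_conj_cycle_word: "set (conj_cycle_word n) \<subseteq> {A, B}"
  by (simp add: conj_cycle_word_def set_replicate_conv_if)

lemma run_conj_cycle_word: "1 \<le> n \<Longrightarrow> run k (conj_cycle_word n) q = swp ((swp q + 1) mod k)"
  by (simp add: conj_cycle_word_def run_replicate_B cyc_def)

lemma run_swapped_conj_cycle_word:
  assumes "2 \<le> n"
  shows "run n (map swap_ab (conj_cycle_word n)) ` {n - 1, 0} = {n - 1, 0}"
proof -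
  have "(2 * n - 1) mod n = n - 1"
    using assms by (simp add: le_mod_geq)
  then have "run n (map swap_ab (conj_cycle_word n)) (n - 1) = 0"
    "run n (map swap_ab (conj_cycle_word n)) 0 = n - 1"
    using assms by (simp_all add: conj_cycle_word_def run_replicate_A cyc_eq swp_lt mod_Suc)
  then show ?thesis
    by auto
qed

definition fixing_images :: "nat \<Rightarrow> nat \<Rightarrow> nat set set" where
  "fixing_images k n = {run k g ` {k - 1, 0} | g.
    set g \<subseteq> {A, B} \<and> run n (map swap_ab g) ` {n - 1, 0} = {n - 1, 0}}"

lemma image_run_fixing_images:
  assumes "Q \<in> fixing_images k n" "set w \<subseteq> {A, B}" "run n (map swap_ab w) ` {n - 1, 0} = {n - 1, 0}"
  shows "run k w ` Q \<in> fixing_images k n"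
proof -
  obtain g where g: "set g \<subseteq> {A, B}" "run k g ` {k - 1, 0} = Q"
    "run n (map swap_ab g) ` {n - 1, 0} = {n - 1, 0}"
    using assms(1) by (auto simp: fixing_images_def)
  have "run k (g @ w) ` {k - 1, 0} = run k w ` Q"
    using g(2) by (simp only: image_run_append)
  moreover have "run n (map swap_ab (g @ w)) ` {n - 1, 0} = {n - 1, 0}"
    using g(3) assms(3) by (simp only: map_append image_run_append)
  ultimately show ?thesis
    unfolding fixing_images_def using g(1) assms(2) by (intro CollectI exI[of _ "g @ w"]) simp
qed

lemma pair_in_fixing_images:
  assumes k: "3 \<le> k" "k \<noteq> 4" and n: "2 \<le> n" and P: "P \<subseteq> {..<k}" "card P = 2"
  shows "P \<in> fixing_images k n"
proof -
  let ?Z = "\<lambda>x y. {swp x, swp y} \<in> fixing_images k n"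
  interpret shift_rho_closed k ?Z
  proof
    show "?Z (k - 1) 1"
      using k unfolding fixing_images_def by (auto intro!: exI[of _ "[]"])
    show "?Z y x" if "?Z x y" for x y
      using that by (simp add: insert_commute)
    show "?Z ((x + 1) mod k) ((y + 1) mod k)" if "?Z x y" for x y
      using image_run_fixing_images[OF that set_conj_cycle_word run_swapped_conj_cycle_word[OF n]] n
      by (simp add: run_conj_cycle_word)
    show "?Z (swp ((swp x + 2) mod k)) (swp ((swp y + 2) mod k))" if "?Z x y" for x y
    proof -
      have "run k [A, A] ` {swp x, swp y} \<in> fixing_images k n"
        by (rule image_run_fixing_images[OF that]) simp_all
      moreover have "run k [A, A] q = (q + 2) mod k" for q
        by (simp add: cyc_def mod_Suc_eq)
      ultimately show ?thesis
        by simp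
    qed
  qed (use k in auto)
  obtain u v where "P = {u, v}" "u \<noteq> v"
    using P(2) by (auto simp: card_2_iff)
  moreover have "swp u < k" "swp v < k" "swp u \<noteq> swp v"
    using P(1) calculation k by (auto simp: swp_lt) (metis swp_swp)
  ultimately show ?thesis
    using all_pairs by (metis swp_swp)
qed

lemma exists_word_to_pairs_ne_4:
  assumes m: "3 \<le> m" "m \<noteq> 4" and n: "3 \<le> n"
    and P: "P \<subseteq> {..<m}" "card P = 2" and Q: "Q \<subseteq> {..<n}" "card Q = 2"
  obtains g where "set g \<subseteq> {A, B}" "run m g ` {m - 1, 0} = P"
    "run n (map swap_ab g) ` {n - 1, 0} = Q"
proof -
  obtain g' where g': "set g' \<subseteq> {A, B}" "run n g' ` {n - 1, 0} = Q"
    using exists_word_to_pair[OF n Q] .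
  define g where "g = map swap_ab g'"
  have g: "set g \<subseteq> {A, B}"
    using set_map_swap_ab[OF g'(1)] by (simp add: g_def)
  have "pre m g P \<subseteq> {..<m}" "card (pre m g P) = 2" "2 \<le> n"
    using pre_subset card_pre[OF g _ P(1)] P(2) m n by simp_all
  then have "pre m g P \<in> fixing_images m n"
    using pair_in_fixing_images[OF m] by blast
  then obtain h where h: "set h \<subseteq> {A, B}" "run m h ` {m - 1, 0} = pre m g P"
    "run n (map swap_ab h) ` {n - 1, 0} = {n - 1, 0}"
    by (auto simp: fixing_images_def)
  have "run m (h @ g) ` {m - 1, 0} = P"
    using image_run_pre[OF g _ P(1)] h(2) m by (simp only: image_run_append)
  moreover have "run n (map swap_ab (h @ g)) ` {n - 1, 0} = Q"
    using g'(2) h(3) by (simp only: image_run_append map_append g_def map_swap_ab_swap_ab)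
  moreover have "set (h @ g) \<subseteq> {A, B}"
    using g h(1) by simp
  ultimately show ?thesis
    using that by blast
qed

lemma exists_word_to_pairs:
  assumes m: "3 \<le> m" and n: "3 \<le> n" and mn: "\<not> (m = 4 \<and> n = 4)"
    and P: "P \<subseteq> {..<m}" "card P = 2" and Q: "Q \<subseteq> {..<n}" "card Q = 2"
  obtains g where "set g \<subseteq> {A, B}" "run m g ` {m - 1, 0} = P"
    "run n (map swap_ab g) ` {n - 1, 0} = Q"
proof (cases "m = 4")
  case True
  obtain g where g: "set g \<subseteq> {A, B}" "run n g ` {n - 1, 0} = Q"
    "run m (map swap_ab g) ` {m - 1, 0} = P"
    using exists_word_to_pairs_ne_4[OF n _ m Q P] True mn by blast
  show ?thesis
    by (rule that[OF set_map_swap_ab[OF g(1)] g(3)]) (simp only: map_swap_ab_swap_ab g(2))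
next
  case False
  then show ?thesis
    using exists_word_to_pairs_ne_4[OF m False n P Q] that by blast
qed

lemma pre_C: "2 \<le> k \<Longrightarrow> X \<subseteq> {..<k} \<Longrightarrow>
    pre k [C] X = (if 0 \<in> X then insert (k - 1) X else X - {k - 1})"
  by (auto simp: pre_def lastto0_def)

lemma exists_pair_inside_or_outside:
  fixes k :: nat
  assumes "3 \<le> k" "X \<subseteq> {..<k}"
  obtains P where "P \<subseteq> {..<k}" "card P = 2" "if 2 \<le> card X then P \<subseteq> X else P \<inter> X = {}"
proof (cases "2 \<le> card X")
  case True
  obtain P where "P \<subseteq> X" "card P = 2" "finite P"
    by (rule obtain_subset_with_card_n[OF True])
  then show ?thesis
    using that[of P] True assms(2) by auto
next
  case False
  have "card ({..<k} - X) = k - card X"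
    using assms(2) by (simp add: card_Diff_subset finite_subset)
  then have "2 \<le> card ({..<k} - X)"
    using False assms(1) by linarith
  then obtain P where "P \<subseteq> {..<k} - X" "card P = 2" "finite P"
    by (rule obtain_subset_with_card_n)
  then show ?thesis
    using that[of P] False by auto
qed

definition step_toward :: "nat \<Rightarrow> nat \<Rightarrow> nat" where
  "step_toward t c = (if c < t then Suc c else if t < c then c - 1 else c)"

lemma exists_pre_C_step:
  assumes k: "3 \<le> k" and X: "X \<subseteq> {..<k}" and g: "set g \<subseteq> {A, B}" "run k g ` {k - 1, 0} = P"
    and P: "if 2 \<le> card X then P \<subseteq> X else P \<inter> X = {}" and t: "1 \<le> t" "t \<le> 2"
  obtains Y where "Y \<subseteq> {..<k}" "pre k [C] Y = pre k g X" "card Y = step_toward t (card X)"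
proof -
  define X' where "X' = pre k g X"
  have X': "X' \<subseteq> {..<k}" "card X' = card X"
    using pre_subset card_pre[OF g(1) _ X] k by (simp_all add: X'_def)
  \<comment> \<open>After g, the states k-1 and 0 lie both inside X' or both outside, as the letter c requires.\<close>
  have inside: "k - 1 \<in> X' \<longleftrightarrow> 2 \<le> card X'" "0 \<in> X' \<longleftrightarrow> 2 \<le> card X'"
    using g(2) P k X' by (auto simp: X'_def pre_def split: if_splits)
  show ?thesis
  proof (cases "card X' < t")
    case True
    then show ?thesis
      using that[of "insert (k - 1) X'"] inside X' t k
      by (auto simp: X'_def pre_C finite_subset step_toward_def)
  next
    case False
    show ?thesis
    proof (cases "t < card X'")
      case True
      then show ?thesis
        using that[of "X' - {k - 1}"] inside X' t k
        by (auto simp: X'_def pre_C finite_subset step_toward_def)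
    next
      case False
      then show ?thesis
        using that[of X'] inside X' \<open>\<not> card X' < t\<close> k
        by (auto simp: X'_def pre_C insert_absorb step_toward_def)
    qed
  qed
qed

definition L_finals :: "nat \<Rightarrow> nat set" where
  "L_finals n = (if 4 \<le> n then {1, 3} else {1})"

lemma reachable_pairs_card_2:
  assumes m: "3 \<le> m" and n: "3 \<le> n" and mn: "\<not> (m = 4 \<and> n = 4)"
    and S: "S \<subseteq> {..<m}" "card S = 2" and T: "T \<subseteq> {..<n}" "card T = card (L_finals n)"
  shows "(S, T) \<in> reachable_pairs m n {0, 2} (L_finals n)"
proof -
  \<comment> \<open>For n = 3 the sets in question have one element, so we move their complements instead.\<close>
  define co where "co X = (if 4 \<le> n then X else {..<n} - X)" for X
  have L: "L_finals n \<subseteq> {..<n}"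
    using n by (auto simp: L_finals_def)
  have co_sub: "co X \<subseteq> {..<n}" if "X \<subseteq> {..<n}" for X
    using that by (auto simp: co_def)
  have co_card: "card (co X) = 2" if "X \<subseteq> {..<n}" "card X = card (L_finals n)" for X
    using that n by (auto simp: co_def L_finals_def card_Diff_subset finite_subset)
  have co_co: "co (co X) = X" if "X \<subseteq> {..<n}" for X
    using that by (auto simp: co_def)
  have pre_co: "pre n w (co X) = co (pre n w X)" for w X
    using n by (simp add: co_def pre_Diff)
  obtain g where g: "set g \<subseteq> {A, B}" "run m g ` {m - 1, 0} = S"
    "run n (map swap_ab g) ` {n - 1, 0} = co T"
    by (rule exists_word_to_pairs[OF m n mn S co_sub[OF T(1)] co_card[OF T]])
  obtain h where h: "set h \<subseteq> {A, B}" "run m h ` {m - 1, 0} = {0, 2}"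
    "run n (map swap_ab h) ` {n - 1, 0} = co (L_finals n)"
  proof (rule exists_word_to_pairs[OF m n mn _ _ co_sub[OF L] co_card[OF L refl]])
    show "{0, 2} \<subseteq> {..<m}" "card {0, 2 :: nat} = 2"
      using m by auto
  qed
  have K: "{m - 1, 0} \<subseteq> {..<m}" and N: "{n - 1, 0} \<subseteq> {..<n}" and F: "{0, 2} \<subseteq> {..<m}"
    using m n by auto
  have "pre m g S = pre m h {0, 2}"
    using pre_image_run[OF g(1) _ K] pre_image_run[OF h(1) _ K] g(2) h(2) m by simp
  moreover have "co (pre n (map swap_ab g) T) = co (pre n (map swap_ab h) (L_finals n))"
    using pre_image_run[OF set_map_swap_ab[OF g(1)] _ N] pre_image_run[OF set_map_swap_ab[OF h(1)] _ N]
      g(3) h(3) n by (simp add: pre_co[symmetric])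
  then have "pre n (map swap_ab g) T = pre n (map swap_ab h) (L_finals n)"
    using co_co[OF pre_subset] by metis
  moreover have "(pre m h {0, 2}, pre n (map swap_ab h) (L_finals n)) \<in> reachable_pairs m n {0, 2} (L_finals n)"
    using reachable_pairs_pre_iff[OF h(1) F L] reachable_pairs_start[OF F L] m n by simp
  ultimately show ?thesis
    using reachable_pairs_pre_iff[OF g(1) S(1) T(1)] m n by simp
qed

lemma exists_reachable_pairs_step:
  assumes m: "3 \<le> m" and n: "3 \<le> n" and mn: "\<not> (m = 4 \<and> n = 4)"
    and S: "S \<subseteq> {..<m}" and T: "T \<subseteq> {..<n}" and t: "1 \<le> t" "t \<le> 2"
  obtains S' T' where "S' \<subseteq> {..<m}" "T' \<subseteq> {..<n}" "card S' = step_toward 2 (card S)"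
    "card T' = step_toward t (card T)"
    "(S', T') \<in> reachable_pairs m n F1 F2 \<Longrightarrow> (S, T) \<in> reachable_pairs m n F1 F2"
proof -
  obtain P where P: "P \<subseteq> {..<m}" "card P = 2" "if 2 \<le> card S then P \<subseteq> S else P \<inter> S = {}"
    using exists_pair_inside_or_outside[OF m S] by blast
  obtain Q where Q: "Q \<subseteq> {..<n}" "card Q = 2" "if 2 \<le> card T then Q \<subseteq> T else Q \<inter> T = {}"
    using exists_pair_inside_or_outside[OF n T] by blast
  obtain g where g: "set g \<subseteq> {A, B}" "run m g ` {m - 1, 0} = P"
    "run n (map swap_ab g) ` {n - 1, 0} = Q"
    using exists_word_to_pairs[OF m n mn P(1,2) Q(1,2)] by blast
  have "1 \<le> (2::nat)" "(2::nat) \<le> 2"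
    by simp_all
  then obtain S' where S': "S' \<subseteq> {..<m}" "pre m [C] S' = pre m g S" "card S' = step_toward 2 (card S)"
    using exists_pre_C_step[OF m S g(1,2) P(3)] by blast
  obtain T' where T': "T' \<subseteq> {..<n}" "pre n [C] T' = pre n (map swap_ab g) T"
    "card T' = step_toward t (card T)"
    using exists_pre_C_step[OF n T set_map_swap_ab[OF g(1)] g(3) Q(3) t] by blast
  have "(S, T) \<in> reachable_pairs m n F1 F2" if "(S', T') \<in> reachable_pairs m n F1 F2"
  proof -
    have "(pre m g S, pre n (map swap_ab g) T) \<in> reachable_pairs m n F1 F2"
      using reachable_pairs_pre[OF that, of "[C]"] S'(2) T'(2) m n by simp
    then show ?thesis
      using reachable_pairs_pre_iff[OF g(1) S T] m n by simp
  qed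
  then show ?thesis
    using that S'(1,3) T'(1,3) by blast
qed

lemma reachable_pairs_all_not_4_4:
  assumes m: "3 \<le> m" and n: "3 \<le> n" and mn: "\<not> (m = 4 \<and> n = 4)"
    and "S \<subseteq> {..<m}" "T \<subseteq> {..<n}"
  shows "(S, T) \<in> reachable_pairs m n {0, 2} (L_finals n)"
proof -
  define t where "t = card (L_finals n)"
  have t: "1 \<le> t" "t \<le> 2"
    by (simp_all add: t_def L_finals_def)
  define \<delta> where "\<delta> X c = (card X - c) + (c - card X)" for X :: "nat set" and c
  show ?thesis
    using assms(4,5)
  proof (induction "\<delta> S 2 + \<delta> T t" arbitrary: S T rule: less_induct)
    case less
    show ?case
    proof (cases "card S = 2 \<and> card T = t")
      case True
      then show ?thesis
        using reachable_pairs_card_2[OF m n mn] less.prems by (simp add: t_def)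
    next
      case False
      obtain S' T' where S'T': "S' \<subseteq> {..<m}" "T' \<subseteq> {..<n}" "card S' = step_toward 2 (card S)"
        "card T' = step_toward t (card T)"
        "(S', T') \<in> reachable_pairs m n {0, 2} (L_finals n) \<Longrightarrow>
          (S, T) \<in> reachable_pairs m n {0, 2} (L_finals n)"
        using exists_reachable_pairs_step[OF m n mn less.prems t] by blast
      have "\<delta> S' 2 + \<delta> T' t < \<delta> S 2 + \<delta> T t"
        using False S'T'(3,4) unfolding \<delta>_def step_toward_def by (simp split: if_splits)
      then show ?thesis
        using less.hyps S'T' by blast
    qed
  qed
qed

text \<open>For m = n = 4 words over a and b cannot move the two 2-sets independently (only 12 of the 36
  pairs of 2-sets lie in the orbit of ({3, 0}, {3, 0})), so the 256 pairs are reached directly.\<close>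

lemma reachable_pairs_4_4:
  assumes "S \<subseteq> {..<4}" "T \<subseteq> {..<4}"
  shows "(S, T) \<in> reachable_pairs 4 4 {0, 2} {1, 3}"
proof -
  have enum: "X = set (filter (\<lambda>q. q \<in> X) [0, 1, 2, 3])" if "X \<subseteq> {..<4}" for X :: "nat set"
    using that by (auto simp: numeral_eq_Suc less_Suc_eq)
  have pre_enum: "pre 4 w X = set (filter (\<lambda>q. run 4 w q \<in> X) [0, 1, 2, 3])" for w X
    by (subst enum[OF pre_subset]) (simp add: pre_def)
  \<comment> \<open>Witness words, found by a breadth-first search. They are evaluated with an explicit rule
    set (the default simpset is far slower) into the normal form produced by the case split below.\<close>
  have words: "\<forall>w \<in> set [
    [], [A], [B], [C], [A, B], [A, C], [B, A], [C, A], [C, B], [A, A, B], [A, A, C], [A, B, A],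
    [A, C, A], [A, C, B], [B, A, B], [B, A, C], [B, B, A], [B, C, A], [B, C, B], [C, A, B],
    [C, A, C], [C, B, A], [A, A, A, C], [A, A, B, A], [A, A, C, A], [A, B, A, C], [A, B, B, A],
    [A, B, C, A], [A, B, C, B], [A, C, A, B], [A, C, A, C], [A, C, B, A], [B, A, A, B],
    [B, A, A, C], [B, A, B, A], [B, A, C, A], [B, A, C, B], [B, B, A, B], [B, B, A, C],
    [B, B, B, A], [B, B, C, B], [B, C, A, B], [B, C, A, C], [B, C, B, A], [C, A, A, B],
    [C, A, A, C], [C, A, B, A], [C, A, C, A], [C, B, A, B], [C, B, A, C], [C, B, B, A],
    [C, B, C, B], [A, A, A, B, A], [A, A, A, C, A], [A, A, B, C, A], [A, A, C, A, B],
    [A, A, C, A, C], [A, B, A, A, B], [A, B, A, A, C], [A, B, A, C, A], [A, B, A, C, B],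
    [A, B, B, A, B], [A, B, B, A, C], [A, B, C, A, B], [A, B, C, A, C], [A, B, C, B, A],
    [A, C, A, A, B], [A, C, A, A, C], [A, C, A, B, A], [A, C, A, C, A], [A, C, B, A, B],
    [A, C, B, A, C], [A, C, B, B, A], [A, C, B, C, B], [B, A, A, A, C], [B, A, A, B, A],
    [B, A, B, A, C], [B, A, B, B, A], [B, A, B, C, A], [B, A, B, C, B], [B, A, C, A, B],
    [B, A, C, A, C], [B, A, C, B, A], [B, B, A, A, C], [B, B, A, B, A], [B, B, A, C, B],
    [B, B, B, C, B], [B, B, C, A, C], [B, B, C, B, A], [B, C, A, A, B], [B, C, A, B, A],
    [B, C, A, C, A], [B, C, B, A, B], [B, C, B, B, A], [B, C, B, C, B], [C, A, A, B, A],
    [C, A, A, C, A], [C, A, B, A, C], [C, A, B, B, A], [C, A, B, C, A], [C, B, A, A, C],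
    [C, B, A, B, A], [C, B, A, C, A], [C, B, A, C, B], [C, B, B, A, B], [C, B, B, B, A],
    [C, B, B, C, B], [C, B, C, B, A], [A, A, A, B, C, A], [A, A, A, C, A, B], [A, A, A, C, A, C],
    [A, A, B, A, A, C], [A, A, B, A, C, A], [A, A, C, A, B, A], [A, A, C, B, A, B],
    [A, A, C, B, A, C], [A, A, C, B, C, B], [A, B, A, A, B, A], [A, B, A, B, C, B],
    [A, B, A, C, A, B], [A, B, A, C, B, A], [A, B, C, A, A, B], [A, B, C, A, B, A],
    [A, B, C, B, A, B], [A, B, C, B, B, A], [A, B, C, B, C, B], [A, C, A, A, B, A],
    [A, C, A, A, C, A], [A, C, A, B, A, C], [A, C, A, B, B, A], [A, C, B, A, A, C],
    [A, C, B, A, C, A], [A, C, B, A, C, B], [A, C, B, B, A, B], [A, C, B, B, B, A],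
    [A, C, B, B, C, B], [A, C, B, C, B, A], [B, A, A, A, C, A], [B, A, B, A, C, A],
    [B, A, B, A, C, B], [B, A, B, C, A, B], [B, A, B, C, B, A], [B, A, C, A, A, B],
    [B, A, C, A, A, C], [B, A, C, A, B, A], [B, A, C, A, C, A], [B, A, C, B, A, B],
    [B, A, C, B, B, A], [B, B, A, A, B, A], [B, B, A, B, A, C], [B, B, A, B, C, B],
    [B, B, B, A, B, A], [B, B, B, A, C, B], [B, B, B, C, A, C], [B, B, B, C, B, A],
    [B, B, C, A, B, A], [B, B, C, A, C, A], [B, B, C, B, A, B], [B, C, A, A, B, A],
    [B, C, A, A, C, A], [B, C, A, B, A, C], [B, C, A, B, C, A], [B, C, B, A, A, C],
    [B, C, B, A, B, A], [B, C, B, B, A, B], [B, C, B, B, C, B], [C, A, A, A, B, A],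
    [C, A, B, A, C, A], [C, A, B, A, C, B], [C, A, B, B, A, C], [C, A, B, C, B, A],
    [C, A, C, A, C, A], [C, B, A, A, A, C], [C, B, A, B, B, A], [C, B, A, B, C, A],
    [C, B, B, A, A, C], [C, B, B, A, B, A], [C, B, C, B, C, B], [A, A, A, C, A, B, A],
    [A, A, A, C, B, A, B], [A, A, A, C, B, C, B], [A, A, B, A, C, A, B], [A, A, C, A, B, B, A],
    [A, A, C, B, A, C, A], [A, A, C, B, A, C, B], [A, A, C, B, C, B, A], [A, B, A, B, C, B, A],
    [A, B, A, C, A, B, A], [A, B, A, C, B, A, B], [A, B, A, C, B, B, A], [A, B, B, A, B, C, B],
    [A, B, C, A, B, A, C], [A, B, C, A, B, C, A], [A, B, C, B, B, A, B], [A, C, A, B, A, C, A],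
    [A, C, A, B, A, C, B], [A, C, B, A, B, B, A], [A, C, B, B, A, B, A], [B, A, A, A, C, A, B],
    [B, A, A, B, A, C, A], [B, A, B, A, C, A, B], [B, A, B, A, C, B, A], [B, A, B, C, A, A, B],
    [B, A, B, C, A, B, A], [B, A, B, C, B, A, B], [B, A, C, A, A, B, A], [B, A, C, A, A, C, A],
    [B, A, C, A, B, B, A], [B, A, C, B, A, A, C], [B, A, C, B, A, C, A], [B, A, C, B, C, B, A],
    [B, B, A, B, C, B, A], [B, B, B, C, A, B, A], [B, B, B, C, A, C, A], [B, B, B, C, B, A, B],
    [B, C, A, B, A, C, A], [B, C, A, B, A, C, B], [B, C, A, B, C, B, A], [B, C, B, A, B, C, A],
    [B, C, B, B, A, B, A], [C, A, A, A, C, A, B], [C, A, A, B, A, C, A], [C, A, A, C, B, C, B],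
    [C, A, B, C, B, B, A], [C, A, B, C, B, C, B], [C, B, A, C, A, A, B], [C, B, A, C, A, C, A],
    [C, B, B, A, B, C, B], [C, B, B, B, C, B, A], [C, B, B, C, A, C, A],
    [A, A, A, C, B, A, C, B], [A, A, C, B, B, A, B, A], [A, B, A, C, B, A, C, A],
    [A, B, C, B, B, A, B, A], [A, C, A, A, A, C, A, B], [A, C, A, A, B, A, C, A],
    [A, C, B, B, A, B, C, B], [A, C, B, B, B, C, B, A], [A, C, B, B, C, A, C, A],
    [B, A, A, C, B, A, C, A], [B, A, B, A, C, A, B, A], [B, A, B, A, C, B, A, B],
    [B, A, B, C, A, B, C, A], [B, A, C, B, B, A, B, A], [B, B, C, B, B, A, B, A],
    [B, C, A, A, C, B, C, B], [A, A, A, C, B, B, A, B, A], [A, A, C, B, B, A, B, C, B],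
    [A, A, C, B, B, B, C, B, A], [B, A, C, A, A, A, C, A, B], [B, A, C, A, A, B, A, C, A],
    [B, B, A, A, C, B, A, C, A], [B, B, B, C, B, B, A, B, A], [C, B, A, B, A, C, A, B, A],
    [C, B, A, B, A, C, B, A, B], [C, B, A, C, A, A, B, A, C, A]].
      (pre 4 w {0, 2}, pre 4 (map swap_ab w) {1, 3}) \<in> reachable_pairs 4 4 {0, 2} {1, 3}"
    using reachable_pairs_word by blast
  have U_4: "U_abc 4 0 A = 1" "U_abc 4 1 A = 2" "U_abc 4 2 A = 3" "U_abc 4 3 A = 0"
    "U_abc 4 0 B = 1" "U_abc 4 1 B = 0" "U_abc 4 2 B = 2" "U_abc 4 3 B = 3"
    "U_abc 4 0 C = 0" "U_abc 4 1 C = 1" "U_abc 4 2 C = 2" "U_abc 4 3 C = 0"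
    by (simp_all add: cyc_def swp_def lastto0_def)
  note witnesses = words[simplified list.set ball_empty ball_simps(7) pre_enum filter.simps run_Nil run_Cons
    list.map swap_ab.simps U_4 insert_iff empty_iff zero_neq_one one_neq_zero zero_neq_numeral
    numeral_neq_zero one_eq_numeral_iff numeral_eq_one_iff numeral_eq_iff num.simps
    simp_thms if_True if_False]
  show ?thesis
    apply (subst enum[OF assms(1)], subst enum[OF assms(2)])
    apply (cases "0 \<in> S"; cases "1 \<in> S"; cases "2 \<in> S"; cases "3 \<in> S";
        cases "0 \<in> T"; cases "1 \<in> T"; cases "2 \<in> T"; cases "3 \<in> T")
    apply (simp_all only: filter.simps if_True if_False list.set witnesses)
    done
qed

lemma reachable_pairs_all:
  assumes "3 \<le> m" "3 \<le> n" "S \<subseteq> {..<m}" "T \<subseteq> {..<n}"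
  shows "(S, T) \<in> reachable_pairs m n {0, 2} (L_finals n)"
proof (cases "m = 4 \<and> n = 4")
  case True
  then show ?thesis
    using reachable_pairs_4_4 assms(3,4) by (simp add: L_finals_def)
next
  case False
  show ?thesis
    by (rule reachable_pairs_all_not_4_4[OF assms(1,2) False assms(3,4)])
qed

lemma exists_word_to_states_fst_ge_2:
  assumes "2 \<le> p" "p < m" "q < n" "2 \<le> n"
  shows "\<exists>v. run m v 0 = p \<and> run n (map swap_ab v) 0 = q"
proof -
  define v where "v = replicate p A @ replicate (q + n - p mod 2) B"
  have "p mod 2 < n" "p mod 2 \<le> q + n" "run n (replicate p B) 0 = p mod 2"
    using assms(4) by (auto simp: run_replicate_B odd_iff_mod_2_eq_one)
  then have "run n (map swap_ab v) 0 = q"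
    using assms(3) by (simp add: v_def run_replicate_A)
  moreover have "run m v 0 = p"
    using assms by (simp add: v_def run_replicate_A run_replicate_B)
  ultimately show ?thesis
    by blast
qed

lemma exists_word_to_states_snd_ge_2:
  assumes "p < m" "2 \<le> q" "q < n" "2 \<le> m"
  shows "\<exists>v. run m v 0 = p \<and> run n (map swap_ab v) 0 = q"
proof -
  obtain v where "run n v 0 = q" "run m (map swap_ab v) 0 = p"
    using exists_word_to_states_fst_ge_2[OF assms(2,3,1,4)] by blast
  then show ?thesis
    by (intro exI[of _ "map swap_ab v"]) (simp add: comp_def)
qed

lemma exists_word_to_states:
  assumes m: "3 \<le> m" and n: "3 \<le> n" and "p < m" "q < n"
  obtains v where "run m v 0 = p" "run n (map swap_ab v) 0 = q"
proof -
  have "\<exists>v. run m v 0 = p \<and> run n (map swap_ab v) 0 = q"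
  proof (cases "2 \<le> p \<or> 2 \<le> q")
    case True
    then show ?thesis
      using exists_word_to_states_fst_ge_2 exists_word_to_states_snd_ge_2 assms by fastforce
  next
    case False
    \<comment> \<open>The letter c maps m-1 and n-1 to 0 and fixes 1 on both automata.\<close>
    define p' where "p' = (if p = 0 then m - 1 else 1)"
    define q' where "q' = (if q = 0 then n - 1 else 1)"
    have "\<exists>v. run m v 0 = p' \<and> run n (map swap_ab v) 0 = q'"
    proof (cases "p = 0 \<or> q = 0")
      case True
      then show ?thesis
        using exists_word_to_states_fst_ge_2[of p' m q' n] exists_word_to_states_snd_ge_2[of p' m q' n] m n
        by (auto simp: p'_def q'_def)
    next
      case False
      then show ?thesis
        using m by (intro exI[of _ "[A]"]) (simp add: p'_def q'_def cyc_def)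
    qed
    then obtain v where "run m v 0 = p'" "run n (map swap_ab v) 0 = q'"
      by blast
    then show ?thesis
      using False m n by (intro exI[of _ "v @ [C]"]) (auto simp: p'_def q'_def lastto0_def)
  qed
  then show ?thesis
    using that by blast
qed

lemma foldl_in_states: "is_dfa Q q0 d F \<Longrightarrow> q \<in> Q \<Longrightarrow> foldl d q w \<in> Q"
  by (induction w arbitrary: q) (auto simp: is_dfa_def)

lemma exists_dfa_of_right_invariant:
  fixes \<sigma> :: "sym list \<Rightarrow> 'a"
  assumes fin: "finite (range \<sigma>)" and tr: "\<And>w x. \<sigma> (w @ [x]) = tr (\<sigma> w) x"
  shows "\<exists>Q q0 d F. is_dfa Q q0 d F \<and> card Q = card (range \<sigma>) \<and>
    dfa_lang q0 d F = {w. acc (\<sigma> w)}"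
proof -
  define N where "N = card (range \<sigma>)"
  obtain h where h: "bij_betw h {0..<N} (range \<sigma>)"
    using ex_bij_betw_nat_finite[OF fin] by (auto simp: N_def)
  define e where "e = inv_into {0..<N} h"
  have he: "h (e s) = s" and e: "e s \<in> {0..<N}" if "s \<in> range \<sigma>" for s
    using bij_betw_inv_into_right[OF h that] bij_betwE[OF bij_betw_inv_into[OF h]] that
    by (auto simp: e_def)
  define d where "d k x = e (tr (h k) x)" for k x
  define F where "F = {k \<in> {0..<N}. acc (h k)}"
  have run: "foldl d (e (\<sigma> [])) w = e (\<sigma> w)" for w
    by (induction w rule: rev_induct) (simp_all add: d_def he tr)
  have "is_dfa {0..<N} (e (\<sigma> [])) d F"
    unfolding is_dfa_def d_def F_def using e bij_betwE[OF h] by (auto simp: tr[symmetric])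
  moreover have "dfa_lang (e (\<sigma> [])) d F = {w. acc (\<sigma> w)}"
    using e he by (auto simp: dfa_lang_def run F_def)
  ultimately show ?thesis
    by (intro exI[of _ "{0..<N}"] exI[of _ "e (\<sigma> [])"] exI[of _ d] exI[of _ F]) (simp add: N_def)
qed

lemma card_range_le_states:
  fixes \<sigma> :: "sym list \<Rightarrow> 'a"
  assumes dfa: "is_dfa Q q0 d F" and lang: "dfa_lang q0 d F = X"
    and sep: "\<And>w1 w2. \<sigma> w1 \<noteq> \<sigma> w2 \<Longrightarrow> \<exists>z. (w1 @ z \<in> X) \<noteq> (w2 @ z \<in> X)"
  shows "card (range \<sigma>) \<le> card Q"
proof -
  define state where "state w = foldl d q0 w" for w
  define rep where "rep q = (SOME w. state w = q)" for q
  have "\<sigma> w = \<sigma> (rep (state w))" for w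
  proof (rule ccontr)
    assume "\<sigma> w \<noteq> \<sigma> (rep (state w))"
    then obtain z where "(w @ z \<in> X) \<noteq> (rep (state w) @ z \<in> X)"
      using sep by blast
    moreover have "state (rep (state w)) = state w"
      unfolding rep_def by (rule someI[of "\<lambda>v. state v = state w"]) (rule refl)
    ultimately show False
      unfolding lang[symmetric] by (simp add: dfa_lang_def state_def)
  qed
  then have "range \<sigma> = (\<sigma> \<circ> rep) ` range state"
    by (auto simp: image_iff)
  moreover have "range state \<subseteq> Q"
    using foldl_in_states[OF dfa] dfa by (auto simp: is_dfa_def state_def)
  moreover have "finite Q"
    using dfa by (simp add: is_dfa_def)
  ultimately show ?thesis
    by (metis card_image_le card_mono finite_subset le_trans)
qed

lemma sc_eq_card_range:
  fixes \<sigma> :: "sym list \<Rightarrow> 'a"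
  assumes "finite (range \<sigma>)" and "\<And>w x. \<sigma> (w @ [x]) = tr (\<sigma> w) x"
    and "\<And>w1 w2. \<sigma> w1 \<noteq> \<sigma> w2 \<Longrightarrow> \<exists>z. acc (\<sigma> (w1 @ z)) \<noteq> acc (\<sigma> (w2 @ z))"
  shows "sc {w. acc (\<sigma> w)} = card (range \<sigma>)"
  unfolding sc_def
proof (rule Least_equality)
  show "\<exists>Q q0 d F. is_dfa Q q0 d F \<and> card Q = card (range \<sigma>) \<and> dfa_lang q0 d F = {w. acc (\<sigma> w)}"
    by (rule exists_dfa_of_right_invariant[OF assms(1,2)])
  show "card (range \<sigma>) \<le> k"
    if "\<exists>Q q0 d F. is_dfa Q q0 d F \<and> card Q = k \<and> dfa_lang q0 d F = {w. acc (\<sigma> w)}" for k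
    using that card_range_le_states[of _ _ _ _ _ \<sigma>] assms(3) by fastforce
qed

definition combine ::
    "(bool \<Rightarrow> bool \<Rightarrow> bool) \<Rightarrow> 'a set \<Rightarrow> 'b set \<Rightarrow> 'a set \<Rightarrow> 'b set \<Rightarrow> ('a \<times> 'b) set"
  where "combine op M N S T = {(p, q) \<in> M \<times> N. op (p \<in> S) (q \<in> T)}"

lemma card_image_Times_Pow:
  assumes "finite M" "finite N"
  shows "card ((\<lambda>(S, T). S \<times> T) ` (Pow M \<times> Pow N)) = (2 ^ card M - 1) * (2 ^ card N - 1) + 1"
proof -
  define NE where "NE = (Pow M - {{}}) \<times> (Pow N - {{}})"
  have "(\<lambda>(S, T). S \<times> T) ` (Pow M \<times> Pow N) = insert {} ((\<lambda>(S, T). S \<times> T) ` NE)"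
    by (auto simp: NE_def image_iff)
  moreover have "{} \<notin> (\<lambda>(S, T). S \<times> T) ` NE" "inj_on (\<lambda>(S, T). S \<times> T) NE"
    by (auto simp: NE_def inj_on_def times_eq_iff)
  moreover have "finite NE" "card NE = (2 ^ card M - 1) * (2 ^ card N - 1)"
    using assms by (simp_all add: NE_def card_cartesian_product card_Pow)
  ultimately show ?thesis
    by (simp add: card_image)
qed

lemma image_Diff_Pow: "(\<lambda>S. M - S) ` Pow M = Pow M"
  by (auto simp: image_iff)

lemma inj_on_Diff_Pow: "inj_on (\<lambda>X. M - X) (Pow M)"
  by (rule inj_onI) blast

lemma card_combine_and:
  assumes "finite M" "finite N"
  shows "card ((\<lambda>(S, T). combine (\<and>) M N S T) ` (Pow M \<times> Pow N)) = (2 ^ card M - 1) * (2 ^ card N - 1) + 1"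
proof -
  have "(\<lambda>(S, T). combine (\<and>) M N S T) ` (Pow M \<times> Pow N) = (\<lambda>(S, T). S \<times> T) ` (Pow M \<times> Pow N)"
    by (rule image_cong) (auto simp: combine_def)
  then show ?thesis
    using card_image_Times_Pow[OF assms] by simp
qed

lemma card_combine_or:
  assumes "finite M" "finite N"
  shows "card ((\<lambda>(S, T). combine (\<or>) M N S T) ` (Pow M \<times> Pow N)) = (2 ^ card M - 1) * (2 ^ card N - 1) + 1"
proof -
  let ?prod = "(\<lambda>(S, T). S \<times> T) ` (Pow M \<times> Pow N)"
  have "(\<lambda>(S, T). combine (\<or>) M N S T) ` (Pow M \<times> Pow N)
      = (\<lambda>X. M \<times> N - X) ` (\<lambda>(S, T). S \<times> T) `
          map_prod (\<lambda>S. M - S) (\<lambda>T. N - T) ` (Pow M \<times> Pow N)"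
    unfolding image_image by (rule image_cong) (auto simp: combine_def)
  also have "\<dots> = (\<lambda>X. M \<times> N - X) ` ?prod"
    by (simp only: map_prod_surj_on[OF image_Diff_Pow image_Diff_Pow])
  moreover have "inj_on (\<lambda>X. M \<times> N - X) ?prod"
    by (rule inj_on_subset[OF inj_on_Diff_Pow]) auto
  ultimately show ?thesis
    using card_image_Times_Pow[OF assms] by (simp add: card_image)
qed

lemma card_combine_diff:
  assumes "finite M" "finite N"
  shows "card ((\<lambda>(S, T). combine (\<lambda>a b. a \<and> \<not> b) M N S T) ` (Pow M \<times> Pow N))
    = (2 ^ card M - 1) * (2 ^ card N - 1) + 1"
proof -
  have "(\<lambda>(S, T). combine (\<lambda>a b. a \<and> \<not> b) M N S T) ` (Pow M \<times> Pow N)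
      = (\<lambda>(S, T). S \<times> T) ` map_prod (\<lambda>S. S) (\<lambda>T. N - T) ` (Pow M \<times> Pow N)"
    unfolding image_image by (rule image_cong) (auto simp: combine_def)
  also have "\<dots> = (\<lambda>(S, T). S \<times> T) ` (Pow M \<times> Pow N)"
    by (simp only: map_prod_surj_on[OF image_ident image_Diff_Pow])
  finally show ?thesis
    using card_image_Times_Pow[OF assms] by simp
qed

lemma inj_on_combine_xor:
  assumes "p0 \<in> M" "q0 \<in> N"
  shows "inj_on (\<lambda>(S, T). combine (\<noteq>) M N S T) (Pow (M - {p0}) \<times> Pow N)"
proof (rule inj_onI, clarify)
  fix S T S' T'
  assume S: "S \<subseteq> M - {p0}" "S' \<subseteq> M - {p0}" and T: "T \<subseteq> N" "T' \<subseteq> N"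
    and eq: "combine (\<noteq>) M N S T = combine (\<noteq>) M N S' T'"
  have mem: "(p, q) \<in> combine (\<noteq>) M N S T \<longleftrightarrow> (p, q) \<in> combine (\<noteq>) M N S' T'" for p q
    using eq by simp
  have "p0 \<notin> S" "p0 \<notin> S'"
    using S by auto
  then have "T = T'"
    using mem[of p0] assms(1) T by (auto simp: combine_def)
  moreover have "S = S'"
    using mem[of _ q0] assms(2) S \<open>T = T'\<close> by (auto simp: combine_def)
  ultimately show "S = S' \<and> T = T'"
    by simp
qed

lemma card_combine_xor:
  assumes "finite M" "finite N" "M \<noteq> {}" "N \<noteq> {}"
  shows "card ((\<lambda>(S, T). combine (\<noteq>) M N S T) ` (Pow M \<times> Pow N)) = 2 ^ (card M + card N - 1)"
proof -
  obtain p0 q0 where p0: "p0 \<in> M" and q0: "q0 \<in> N"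
    using assms(3,4) by blast
  define R where "R = Pow (M - {p0}) \<times> Pow N"
  let ?f = "\<lambda>(S, T). combine (\<noteq>) M N S T"
  have "?f ` (Pow M \<times> Pow N) \<subseteq> ?f ` R"
  proof clarify
    fix S T
    assume ST: "S \<subseteq> M" "T \<subseteq> N"
    have "combine (\<noteq>) M N S T = combine (\<noteq>) M N (M - S) (N - T)"
      using ST by (auto simp: combine_def)
    moreover have "(if p0 \<in> S then (M - S, N - T) else (S, T)) \<in> R"
      using ST by (auto simp: R_def)
    ultimately show "combine (\<noteq>) M N S T \<in> ?f ` R"
      by (cases "p0 \<in> S") (auto intro: rev_image_eqI)
  qed
  moreover have "?f ` R \<subseteq> ?f ` (Pow M \<times> Pow N)"
    by (rule image_mono) (auto simp: R_def)
  ultimately have "?f ` (Pow M \<times> Pow N) = ?f ` R"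
    by (rule subset_antisym)
  moreover have "card M - 1 + card N = card M + card N - 1"
    using assms(1,3) by (simp add: card_gt_0_iff Suc_le_eq)
  then have "card R = 2 ^ (card M + card N - 1)"
    using assms(1,2) p0 by (simp add: R_def card_cartesian_product card_Pow power_add[symmetric])
  ultimately show ?thesis
    using inj_on_combine_xor[OF p0 q0] by (simp add: card_image R_def)
qed

lemma reversal_Collect: "reversal {w. P w} = {w. P (rev w)}"
  by (auto simp: reversal_def image_iff) (metis rev_rev_ident)

definition rev_state :: "(bool \<Rightarrow> bool \<Rightarrow> bool) \<Rightarrow> nat \<Rightarrow> nat \<Rightarrow> sym list \<Rightarrow> (nat \<times> nat) set"
  where
  "rev_state op m n w = combine op {..<m} {..<n} (pre m (rev w) {0, 2})
    (pre n (map swap_ab (rev w)) (L_finals n))"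

lemma mem_rev_state_append:
  assumes "2 \<le> m" "2 \<le> n"
  shows "(p, q) \<in> rev_state op m n (w @ rev v) \<longleftrightarrow>
    p < m \<and> q < n \<and> (run m v p, run n (map swap_ab v) q) \<in> rev_state op m n w"
  using assms by (auto simp: rev_state_def combine_def pre_def run_lt)

lemma range_rev_state:
  assumes m: "3 \<le> m" and n: "3 \<le> n"
  shows "range (rev_state op m n) = (\<lambda>(S, T). combine op {..<m} {..<n} S T) ` (Pow {..<m} \<times> Pow {..<n})"
proof
  show "range (rev_state op m n) \<subseteq> (\<lambda>(S, T). combine op {..<m} {..<n} S T) ` (Pow {..<m} \<times> Pow {..<n})"
    using pre_subset by (fastforce simp: rev_state_def)
  show "(\<lambda>(S, T). combine op {..<m} {..<n} S T) ` (Pow {..<m} \<times> Pow {..<n}) \<subseteq> range (rev_state op m n)"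
  proof clarify
    fix S T
    assume "S \<subseteq> {..<m}" "T \<subseteq> {..<n}"
    then obtain v where "S = pre m v {0, 2}" "T = pre n (map swap_ab v) (L_finals n)"
      using reachable_pairs_all[OF m n] unfolding reachable_pairs_def by blast
    then show "combine op {..<m} {..<n} S T \<in> range (rev_state op m n)"
      by (auto simp: rev_state_def intro: range_eqI[of _ _ "rev v"])
  qed
qed

lemma rev_state_separated:
  assumes m: "3 \<le> m" and n: "3 \<le> n" and ne: "rev_state op m n w1 \<noteq> rev_state op m n w2"
  shows "\<exists>z. ((0, 0) \<in> rev_state op m n (w1 @ z)) \<noteq> ((0, 0) \<in> rev_state op m n (w2 @ z))"
proof -
  obtain x where "x \<in> rev_state op m n w1 \<longleftrightarrow> x \<notin> rev_state op m n w2"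
    using ne by (meson set_eqI)
  moreover obtain p q where "x = (p, q)"
    by fastforce
  ultimately have pq: "(p, q) \<in> rev_state op m n w1 \<longleftrightarrow> (p, q) \<notin> rev_state op m n w2"
    by simp
  then have "p < m" "q < n"
    by (auto simp: rev_state_def combine_def)
  then obtain v where "run m v 0 = p" "run n (map swap_ab v) 0 = q"
    using exists_word_to_states[OF m n] by blast
  then have "(0, 0) \<in> rev_state op m n (w @ rev v) \<longleftrightarrow> (p, q) \<in> rev_state op m n w" for w
    using mem_rev_state_append[of m n 0 0 op w v] m n by simp
  then show ?thesis
    using pq by blast
qed

lemma sc_combine:
  assumes m: "3 \<le> m" and n: "3 \<le> n"
  shows "sc {w. op (run m (rev w) 0 \<in> {0, 2}) (run n (map swap_ab (rev w)) 0 \<in> L_finals n)}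
    = card ((\<lambda>(S, T). combine op {..<m} {..<n} S T) ` (Pow {..<m} \<times> Pow {..<n}))"
proof -
  define tr where "tr R x = {(p, q) \<in> {..<m} \<times> {..<n}. (U_abc m p x, U_abc n q (swap_ab x)) \<in> R}"
    for R x
  have "sc {w. (0, 0) \<in> rev_state op m n w} = card (range (rev_state op m n))"
  proof (rule sc_eq_card_range[where tr = tr])
    show "finite (range (rev_state op m n))"
      unfolding range_rev_state[OF m n] by simp
    show "rev_state op m n (w @ [x]) = tr (rev_state op m n w) x" for w x
      using mem_rev_state_append[of m n _ _ op w "[x]"] m n by (auto simp: tr_def)
  qed (rule rev_state_separated[OF m n])
  moreover have "{w. op (run m (rev w) 0 \<in> {0, 2}) (run n (map swap_ab (rev w)) 0 \<in> L_finals n)}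
      = {w. (0, 0) \<in> rev_state op m n w}"
    using m n by (simp add: rev_state_def combine_def pre_def)
  ultimately show ?thesis
    by (simp add: range_rev_state[OF m n])
qed

theorem theorem3:
  fixes m n :: nat
  assumes "m \<ge> 3" and "n \<ge> 3"
  defines "K \<equiv> U_lang_abc {0, 2} m"
      and "L \<equiv> (if n \<ge> 4 then U_lang_bac {1, 3} n else U_lang_bac {1} n)"
  shows "sc (reversal K \<union> reversal L) = (2 ^ m - 1) * (2 ^ n - 1) + 1 \<and>
         sc (reversal K \<inter> reversal L) = (2 ^ m - 1) * (2 ^ n - 1) + 1 \<and>
         sc (reversal K - reversal L) = (2 ^ m - 1) * (2 ^ n - 1) + 1 \<and>
         sc (symdiff (reversal K) (reversal L)) = 2 ^ (m + n - 1)"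
proof -
  let ?K = "\<lambda>w. run m (rev w) 0 \<in> {0, 2}"
    and ?L = "\<lambda>w. run n (map swap_ab (rev w)) 0 \<in> L_finals n"
  have "reversal K = {w. ?K w}"
    by (simp add: K_def U_lang_abc_def dfa_lang_def run_def reversal_Collect)
  moreover have "reversal L = {w. ?L w}"
    by (simp add: L_def U_lang_bac_def dfa_lang_def L_finals_def foldl_U_bac reversal_Collect)
  ultimately have "reversal K \<union> reversal L = {w. ?K w \<or> ?L w}"
    "reversal K \<inter> reversal L = {w. ?K w \<and> ?L w}"
    "reversal K - reversal L = {w. ?K w \<and> \<not> ?L w}"
    "symdiff (reversal K) (reversal L) = {w. ?K w \<noteq> ?L w}"
    by (auto simp: symdiff_def)
  then show ?thesis
    using sc_combine[OF assms(1,2), of "(\<or>)"] sc_combine[OF assms(1,2), of "(\<and>)"]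
      sc_combine[OF assms(1,2), of "\<lambda>a b. a \<and> \<not> b"] sc_combine[OF assms(1,2), of "(\<noteq>)"]
      card_combine_or[of "{..<m}" "{..<n}"] card_combine_and[of "{..<m}" "{..<n}"]
      card_combine_diff[of "{..<m}" "{..<n}"] card_combine_xor[of "{..<m}" "{..<n}"] assms(1,2)
    by (simp add: lessThan_empty_iff)
qed

end
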